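(* Let $n\ge1$, $y\in\mathbb{R}^n$, $\lambda\ge0$, and let $\hat\theta^{(\lambda)}=\operatorname{argmin}_{\theta\in\mathbb{R}^n}\frac12\sum_{i=1}^n(y_i-\theta_i)^2+\lambda\sum_{i=1}^{n-1}|\theta_{i+1}-\theta_i|$ be the Fused Lasso estimator. Then $$\max_{j\le n}\ \min_{j\le i\le n}\Big[\overline{y}_{[i:n]}+\frac{C_{i,j}\lambda}{n-i+1}\Big]\le\hat\theta^{(\lambda)}_n\le\min_{j\le n}\ \max_{j\le i\le n}\Big[\overline{y}_{[i:n]}-\frac{C_{i,j}\lambda}{n-i+1}\Big],$$ where $j,i$ range over $[n]$, $C_{i,j}=1$ if $i>j$ and $C_{i,j}=-1$ if $i=j$.
   Context: $[n]=\{1,\dots,n\}$, $[i:n]=\{i,\dots,n\}$, and $\overline{y}_{[i:n]}$ is the average of $y_i,\dots,y_n$. *)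

theory Defs
  imports Complex_Main
begin

text \<open>Vectors in R^n are represented as functions nat => real, using indices 1..n.\<close>

definition fused_lasso_obj :: "nat \<Rightarrow> real \<Rightarrow> (nat \<Rightarrow> real) \<Rightarrow> (nat \<Rightarrow> real) \<Rightarrow> real" where
  "fused_lasso_obj n lam y theta =
     (1/2) * (\<Sum>i=1..n. (y i - theta i)^2) + lam * (\<Sum>i=1..n-1. \<bar>theta (Suc i) - theta i\<bar>)"

definition is_fused_lasso :: "nat \<Rightarrow> real \<Rightarrow> (nat \<Rightarrow> real) \<Rightarrow> (nat \<Rightarrow> real) \<Rightarrow> bool" where
  "is_fused_lasso n lam y theta \<longleftrightarrow>
     (\<forall>theta'. fused_lasso_obj n lam y theta \<le> fused_lasso_obj n lam y theta')"

definition avg :: "(nat \<Rightarrow> real) \<Rightarrow> nat \<Rightarrow> nat \<Rightarrow> real" where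
  "avg y i n = (\<Sum>k=i..n. y k) / real (n - i + 1)"

definition Cij :: "nat \<Rightarrow> nat \<Rightarrow> real" where
  "Cij i j = (if i > j then 1 else if i = j then -1 else 0)"

end

theory Submission
  imports Defs
begin

text \<open>Shifting the tail \<theta>_i, ..., \<theta>_n of a minimiser by e changes the squared loss by
  e G_i + (n - i + 1) e^2/2, where G_i is the tail sum of the residuals \<theta>_k - y_k, and the penalty
  only through the jump \<theta>_i - \<theta>_(i-1). Optimality against small e > 0 therefore gives
  G_i \<ge> -\<lambda>, and even G_i \<ge> \<lambda> where \<theta> jumps down at i. For j \<le> n let p \<ge> j be least with
  \<theta>_k \<le> \<theta>_n for all k \<ge> p: either p = j or \<theta> jumps down at p, so G_p \<ge> C_(p,j) \<lambda>, and
  averaging \<theta>_k \<le> \<theta>_n over [p:n] gives the lower bound at j. The upper bound is the lower bound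
  for -y, whose minimiser is -\<theta>.\<close>

lemma nonneg_if_nonneg_at_right_0:
  fixes a m \<delta> :: real
  assumes "0 < \<delta>" and nonneg: "\<And>e. 0 < e \<Longrightarrow> e < \<delta> \<Longrightarrow> 0 \<le> a * e + m * e\<^sup>2"
  shows "0 \<le> a"
proof (rule tendsto_lowerbound)
  show "((\<lambda>e. a + m * e) \<longlongrightarrow> a) (at_right 0)"
    by (auto intro!: tendsto_eq_intros)
  have "0 \<le> a + m * e" if "0 < e" "e < \<delta>" for e
  proof -
    have "0 \<le> e * (a + m * e)"
      using nonneg[OF that] by (simp add: power2_eq_square algebra_simps)
    then show ?thesis using \<open>0 < e\<close> by (simp add: zero_le_mult_iff)
  qed
  then show "\<forall>\<^sub>F e in at_right 0. 0 \<le> a + m * e"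
    using \<open>0 < \<delta>\<close> by (auto simp: eventually_at_right_field)
qed simp

lemma fused_lasso_obj_uminus:
  "fused_lasso_obj n lam (\<lambda>k. - y k) (\<lambda>k. - theta k) = fused_lasso_obj n lam y theta"
  unfolding fused_lasso_obj_def by (simp add: power2_commute abs_minus_commute)

lemma is_fused_lasso_uminus:
  assumes "is_fused_lasso n lam y theta"
  shows "is_fused_lasso n lam (\<lambda>k. - y k) (\<lambda>k. - theta k)"
  unfolding is_fused_lasso_def
proof
  fix theta'
  show "fused_lasso_obj n lam (\<lambda>k. - y k) (\<lambda>k. - theta k) \<le> fused_lasso_obj n lam (\<lambda>k. - y k) theta'"
    using assms fused_lasso_obj_uminus[of n lam y "\<lambda>k. - theta' k"]
    by (simp add: fused_lasso_obj_uminus is_fused_lasso_def)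
qed

lemma avg_uminus: "avg (\<lambda>k. - y k) i n = - avg y i n"
  unfolding avg_def by (simp add: sum_negf)

lemma fused_lasso_obj_shift_tail:
  fixes theta y :: "nat \<Rightarrow> real"
  assumes "1 \<le> i" "i \<le> n"
  shows "fused_lasso_obj n lam y (\<lambda>k. theta k + (if i \<le> k then e else 0)) - fused_lasso_obj n lam y theta
     = e * (\<Sum>k=i..n. theta k - y k) + real (n - i + 1) * e\<^sup>2 / 2
       + (if 2 \<le> i then lam * (\<bar>theta i - theta (i - 1) + e\<bar> - \<bar>theta i - theta (i - 1)\<bar>) else 0)"
proof -
  define theta' where "theta' = (\<lambda>k. theta k + (if i \<le> k then e else 0))"
  have "(\<Sum>k=1..n. (y k - theta' k)\<^sup>2) - (\<Sum>k=1..n. (y k - theta k)\<^sup>2)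
      = (\<Sum>k=1..n. if i \<le> k then 2 * e * (theta k - y k) + e\<^sup>2 else 0)"
    unfolding sum_subtractf[symmetric]
    by (rule sum.cong) (auto simp: theta'_def power2_eq_square algebra_simps)
  also have "\<dots> = (\<Sum>k=i..n. 2 * e * (theta k - y k) + e\<^sup>2)"
    using assms by (simp add: sum.inter_filter[symmetric]) (rule sum.cong; auto)
  also have "\<dots> = 2 * e * (\<Sum>k=i..n. theta k - y k) + real (n - i + 1) * e\<^sup>2"
    using assms by (simp add: sum.distrib sum_distrib_left)
  finally have loss: "(\<Sum>k=1..n. (y k - theta' k)\<^sup>2) - (\<Sum>k=1..n. (y k - theta k)\<^sup>2)
      = 2 * e * (\<Sum>k=i..n. theta k - y k) + real (n - i + 1) * e\<^sup>2" .
  have "(\<Sum>k=1..n-1. \<bar>theta' (Suc k) - theta' k\<bar>) - (\<Sum>k=1..n-1. \<bar>theta (Suc k) - theta k\<bar>)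
      = (\<Sum>k=1..n-1. if k = i - 1 then \<bar>theta (Suc k) - theta k + e\<bar> - \<bar>theta (Suc k) - theta k\<bar> else 0)"
    unfolding sum_subtractf[symmetric]
    by (rule sum.cong) (use assms in \<open>auto simp: theta'_def\<close>)
  also have "\<dots> = (if 2 \<le> i then \<bar>theta i - theta (i - 1) + e\<bar> - \<bar>theta i - theta (i - 1)\<bar> else 0)"
    using assms by (auto simp: sum.delta)
  finally have penalty: "(\<Sum>k=1..n-1. \<bar>theta' (Suc k) - theta' k\<bar>) - (\<Sum>k=1..n-1. \<bar>theta (Suc k) - theta k\<bar>)
      = (if 2 \<le> i then \<bar>theta i - theta (i - 1) + e\<bar> - \<bar>theta i - theta (i - 1)\<bar> else 0)" .
  show ?thesis
    unfolding theta'_def[symmetric] fused_lasso_obj_def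
    using loss penalty by (auto simp: algebra_simps split: if_splits)
qed

lemma is_fused_lasso_shift_tail_nonneg:
  fixes theta y :: "nat \<Rightarrow> real"
  assumes "is_fused_lasso n lam y theta" "1 \<le> i" "i \<le> n"
  shows "0 \<le> e * (\<Sum>k=i..n. theta k - y k) + real (n - i + 1) * e\<^sup>2 / 2
       + (if 2 \<le> i then lam * (\<bar>theta i - theta (i - 1) + e\<bar> - \<bar>theta i - theta (i - 1)\<bar>) else 0)"
  using fused_lasso_obj_shift_tail[OF assms(2,3), of lam y theta e] assms(1)
  unfolding is_fused_lasso_def by (metis diff_ge_0_iff_ge)

lemma is_fused_lasso_tail_residual_ge:
  fixes theta y :: "nat \<Rightarrow> real"
  assumes "is_fused_lasso n lam y theta" "lam \<ge> 0" "1 \<le> i" "i \<le> n"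
  shows "- lam \<le> (\<Sum>k=i..n. theta k - y k)"
proof -
  have "0 \<le> (\<Sum>k=i..n. theta k - y k) + lam"
  proof (rule nonneg_if_nonneg_at_right_0)
    fix e :: real
    assume "0 < e"
    then have "(if 2 \<le> i then lam * (\<bar>theta i - theta (i - 1) + e\<bar> - \<bar>theta i - theta (i - 1)\<bar>) else 0)
        \<le> lam * e"
      using \<open>lam \<ge> 0\<close> by (auto intro!: mult_left_mono)
    then show "0 \<le> ((\<Sum>k=i..n. theta k - y k) + lam) * e + real (n - i + 1) / 2 * e\<^sup>2"
      using is_fused_lasso_shift_tail_nonneg[OF assms(1,3,4), of e] by (simp add: algebra_simps)
  qed (rule zero_less_one)
  then show ?thesis by simp
qed

lemma is_fused_lasso_tail_residual_ge_at_descent: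
  fixes theta y :: "nat \<Rightarrow> real"
  assumes "is_fused_lasso n lam y theta" "2 \<le> i" "i \<le> n" and descent: "theta i < theta (i - 1)"
  shows "lam \<le> (\<Sum>k=i..n. theta k - y k)"
proof -
  have "0 \<le> (\<Sum>k=i..n. theta k - y k) - lam"
  proof (rule nonneg_if_nonneg_at_right_0)
    show "0 < theta (i - 1) - theta i" using descent by simp
  next
    fix e :: real
    assume "0 < e" "e < theta (i - 1) - theta i"
    then have "\<bar>theta i - theta (i - 1) + e\<bar> - \<bar>theta i - theta (i - 1)\<bar> = - e"
      using descent by simp
    then have "0 \<le> e * (\<Sum>k=i..n. theta k - y k) + real (n - i + 1) * e\<^sup>2 / 2 + lam * - e"
      using is_fused_lasso_shift_tail_nonneg[OF assms(1) _ assms(3), of e] assms(2) by simp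
    then show "0 \<le> ((\<Sum>k=i..n. theta k - y k) - lam) * e + real (n - i + 1) / 2 * e\<^sup>2"
      by (simp add: algebra_simps)
  qed
  then show ?thesis by simp
qed

lemma exists_least_tail_le_last:
  fixes f :: "nat \<Rightarrow> 'a::linorder"
  assumes "j \<le> n"
  obtains p where "j \<le> p" "p \<le> n" "\<forall>k\<in>{p..n}. f k \<le> f n" "j < p \<Longrightarrow> f n < f (p - 1)"
proof -
  define P where "P p \<longleftrightarrow> j \<le> p \<and> (\<forall>k\<in>{p..n}. f k \<le> f n)" for p
  define p where "p = (LEAST p. P p)"
  have "P n" using assms by (auto simp: P_def)
  then have "P p" "p \<le> n" unfolding p_def by (auto intro: LeastI Least_le)
  moreover have "f n < f (p - 1)" if "j < p"
  proof -
    have "\<not> P (p - 1)" using that unfolding p_def by (intro not_less_Least) auto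
    moreover have "{p - 1..n} = insert (p - 1) {p..n}" using that \<open>p \<le> n\<close> by auto
    ultimately show ?thesis using \<open>P p\<close> that by (auto simp: P_def not_le)
  qed
  ultimately show ?thesis using that by (auto simp: P_def)
qed

lemma avg_add_le_if_tail_le:
  fixes theta y :: "nat \<Rightarrow> real"
  assumes "p \<le> n" and "\<forall>k\<in>{p..n}. theta k \<le> c" and "c0 \<le> (\<Sum>k=p..n. theta k - y k)"
  shows "avg y p n + c0 / real (n - p + 1) \<le> c"
proof -
  have "(\<Sum>k=p..n. y k) + c0 \<le> (\<Sum>k=p..n. theta k)"
    using assms(3) by (simp add: sum_subtractf)
  also have "\<dots> \<le> (\<Sum>k=p..n. c)"
    using assms(2) by (intro sum_mono) simp
  also have "\<dots> = real (n - p + 1) * c"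
    using assms(1) by (simp add: Suc_diff_le)
  finally show ?thesis
    unfolding avg_def by (simp add: add_divide_distrib[symmetric] divide_le_eq mult.commute)
qed

lemma is_fused_lasso_last_ge:
  fixes theta y :: "nat \<Rightarrow> real"
  assumes opt: "is_fused_lasso n lam y theta" and "lam \<ge> 0" "1 \<le> j" "j \<le> n"
  shows "\<exists>i\<in>{j..n}. avg y i n + Cij i j * lam / real (n - i + 1) \<le> theta n"
proof -
  obtain p where p: "j \<le> p" "p \<le> n" "\<forall>k\<in>{p..n}. theta k \<le> theta n"
    and jump: "j < p \<Longrightarrow> theta n < theta (p - 1)"
    using exists_least_tail_le_last[OF \<open>j \<le> n\<close>] by blast
  have descent: "theta p < theta (p - 1)" if "j < p"
  proof -
    have "theta p \<le> theta n" using p by simp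
    then show ?thesis using jump[OF that] by linarith
  qed
  have "Cij p j * lam \<le> (\<Sum>k=p..n. theta k - y k)"
  proof (cases "p = j")
    case True
    then show ?thesis using is_fused_lasso_tail_residual_ge[OF opt] assms p by (simp add: Cij_def)
  next
    case False
    then show ?thesis
      using is_fused_lasso_tail_residual_ge_at_descent[OF opt _ p(2) descent] assms p by (simp add: Cij_def)
  qed
  then show ?thesis using p by (intro bexI[of _ p] avg_add_le_if_tail_le) auto
qed

lemma is_fused_lasso_last_le:
  fixes theta y :: "nat \<Rightarrow> real"
  assumes "is_fused_lasso n lam y theta" and "lam \<ge> 0" "1 \<le> j" "j \<le> n"
  shows "\<exists>i\<in>{j..n}. theta n \<le> avg y i n - Cij i j * lam / real (n - i + 1)"
proof -
  obtain i where "i \<in> {j..n}"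
    and "avg (\<lambda>k. - y k) i n + Cij i j * lam / real (n - i + 1) \<le> - theta n"
    using is_fused_lasso_last_ge[OF is_fused_lasso_uminus[OF assms(1)] assms(2-4)] by blast
  then show ?thesis by (intro bexI[of _ i]) (auto simp: avg_uminus)
qed

theorem theorem9:
  fixes n :: nat and y theta :: "nat \<Rightarrow> real" and lam :: real
  assumes "n \<ge> 1" and "lam \<ge> 0"
    and "is_fused_lasso n lam y theta"
  shows "(MAX j\<in>{1..n}. MIN i\<in>{j..n}. avg y i n + Cij i j * lam / real (n - i + 1)) \<le> theta n
       \<and> theta n \<le> (MIN j\<in>{1..n}. MAX i\<in>{j..n}. avg y i n - Cij i j * lam / real (n - i + 1))"
  using assms is_fused_lasso_last_ge[OF assms(3,2)] is_fused_lasso_last_le[OF assms(3,2)]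
  by (auto simp: Max_le_iff Min_le_iff Min_ge_iff Max_ge_iff)

end
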